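(* Let $n\ge 1$ and $d\ge 2$ be integers. Consider the $(n,d)$ random access code task: Alice receives a string $x=x_1x_2\cdots x_n$ with each $x_i\in\{1,\dots,d\}$, drawn uniformly from all $d^n$ strings; Bob receives $y\in\{1,\dots,n\}$ uniformly at random and outputs $z\in\{1,\dots,d\}$. A classical protocol consists of an encoding, i.e. conditional probability distributions $p_e(m|x)$ over messages $m$ from a finite set of arbitrary size, and a decoding, i.e. conditional probability distributions $p_d(z|y,m)$; it yields $p(z|x,y)=\sum_m p_e(m|x)p_d(z|y,m)$. Its success metric is $$\mathcal{S}_C(n,d)=\frac{1}{n d^n}\sum_{x,y} p(z=x_y\,|\,x,y),$$ and its distinguishability is $$\mathcal{D}_C=\frac{1}{d^n}\sum_m \max_x p_e(m|x).$$ Then every classical protocol satisfies $$n\,\mathcal{S}_C(n,d)+1-n\le \mathcal{D}_C.$$ *)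

theory Defs
  imports Complex_Main
begin

text \<open>Strings x = x_1 ... x_n with letters in {1..d}, represented as lists of length n;
  x_y (for y in {1..n}) is xs ! (y - 1).\<close>
definition rac_strings :: "nat \<Rightarrow> nat \<Rightarrow> nat list set" where
  "rac_strings n d = {xs. length xs = n \<and> set xs \<subseteq> {1..d}}"

text \<open>A classical protocol with message set M: encoding pe x m = p_e(m|x),
  decoding pd y m z = p_d(z|y,m); both conditional probability distributions.\<close>
definition classical_protocol ::
  "nat \<Rightarrow> nat \<Rightarrow> 'm set \<Rightarrow> (nat list \<Rightarrow> 'm \<Rightarrow> real) \<Rightarrow> (nat \<Rightarrow> 'm \<Rightarrow> nat \<Rightarrow> real) \<Rightarrow> bool" where
  "classical_protocol n d M pe pd \<longleftrightarrow>
     finite M \<and>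
     (\<forall>x\<in>rac_strings n d. (\<forall>m\<in>M. pe x m \<ge> 0) \<and> (\<Sum>m\<in>M. pe x m) = 1) \<and>
     (\<forall>y\<in>{1..n}. \<forall>m\<in>M. (\<forall>z\<in>{1..d}. pd y m z \<ge> 0) \<and> (\<Sum>z\<in>{1..d}. pd y m z) = 1)"

definition rac_prob ::
  "'m set \<Rightarrow> (nat list \<Rightarrow> 'm \<Rightarrow> real) \<Rightarrow> (nat \<Rightarrow> 'm \<Rightarrow> nat \<Rightarrow> real) \<Rightarrow> nat \<Rightarrow> nat list \<Rightarrow> nat \<Rightarrow> real" where
  "rac_prob M pe pd z x y = (\<Sum>m\<in>M. pe x m * pd y m z)"

definition success_C ::
  "nat \<Rightarrow> nat \<Rightarrow> 'm set \<Rightarrow> (nat list \<Rightarrow> 'm \<Rightarrow> real) \<Rightarrow> (nat \<Rightarrow> 'm \<Rightarrow> nat \<Rightarrow> real) \<Rightarrow> real" where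
  "success_C n d M pe pd =
     1 / (real n * real d ^ n) *
     (\<Sum>x\<in>rac_strings n d. \<Sum>y\<in>{1..n}. rac_prob M pe pd (x ! (y - 1)) x y)"

definition distinguishability_C ::
  "nat \<Rightarrow> nat \<Rightarrow> 'm set \<Rightarrow> (nat list \<Rightarrow> 'm \<Rightarrow> real) \<Rightarrow> real" where
  "distinguishability_C n d M pe =
     1 / real d ^ n * (\<Sum>m\<in>M. Max ((\<lambda>x. pe x m) ` rac_strings n d))"

end

theory Submission
  imports Defs "HOL-Analysis.Infinite_Products"
begin

text \<open>Fix a message m and read the decoder as guessing, independently at every position i,
  a letter with probability p_d(z|i,m). By the Weierstrass product inequality, the expected
  number of correct positions exceeds n - 1 by at most the probability that the whole string x
  is guessed correctly. Weighting with p_e(m|x) and bounding p_e(m|x) by its maximum over x,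
  the product distribution of guesses sums to 1 over all strings, so message m contributes at
  most max_x p_e(m|x).\<close>

lemma sum_lists_length_prod:
  fixes p :: "nat \<Rightarrow> 'a \<Rightarrow> 'b::comm_semiring_1"
  shows "(\<Sum>xs | set xs \<subseteq> A \<and> length xs = n. \<Prod>i<n. p i (xs ! i)) = (\<Prod>i<n. \<Sum>z\<in>A. p i z)"
proof (induction n arbitrary: p)
  case 0
  have "{xs. set xs \<subseteq> A \<and> length xs = 0} = {[]}" by auto
  then show ?case by simp
next
  case (Suc n)
  let ?L = "{xs. set xs \<subseteq> A \<and> length xs = n}"
  have inj: "inj_on (\<lambda>(xs, z). z # xs) (?L \<times> A)"
    by (auto simp: inj_on_def)
  have "(\<Sum>xs | set xs \<subseteq> A \<and> length xs = Suc n. \<Prod>i<Suc n. p i (xs ! i))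
      = (\<Sum>(xs, z)\<in>?L \<times> A. \<Prod>i<Suc n. p i ((z # xs) ! i))"
    unfolding lists_length_Suc_eq by (subst sum.reindex[OF inj]) (simp add: case_prod_unfold)
  also have "\<dots> = (\<Sum>z\<in>A. p 0 z * (\<Sum>xs\<in>?L. \<Prod>i<n. p (Suc i) (xs ! i)))"
    by (subst sum.cartesian_product[symmetric], subst sum.swap)
      (simp add: prod.lessThan_Suc_shift sum_distrib_left del: prod.lessThan_Suc)
  also have "\<dots> = (\<Prod>i<Suc n. \<Sum>z\<in>A. p i z)"
    by (simp add: Suc.IH[of "\<lambda>i. p (Suc i)"] prod.lessThan_Suc_shift sum_distrib_right del: prod.lessThan_Suc)
  finally show ?case .
qed

lemma sum_positions_le_prod:
  fixes a :: "nat \<Rightarrow> real"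
  assumes "\<And>i. i < n \<Longrightarrow> a i \<in> {0..1}"
  shows "(\<Sum>i<n. a i) \<le> real n - 1 + (\<Prod>i<n. a i)"
proof -
  have "1 - (\<Sum>i<n. 1 - a i) \<le> (\<Prod>i<n. 1 - (1 - a i))"
    using assms by (intro Weierstrass_prod_ineq) auto
  then show ?thesis by (simp add: sum_subtractf)
qed

lemma sum_weighted_correct_positions_le:
  fixes A :: "'a set" and n :: nat and w :: "'a list \<Rightarrow> real" and q :: "nat \<Rightarrow> 'a \<Rightarrow> real"
  defines "L \<equiv> {xs. set xs \<subseteq> A \<and> length xs = n}"
  assumes "finite A"
    and w_nonneg: "\<And>x. x \<in> L \<Longrightarrow> 0 \<le> w x" and w_le: "\<And>x. x \<in> L \<Longrightarrow> w x \<le> B"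
    and q_nonneg: "\<And>i z. i < n \<Longrightarrow> z \<in> A \<Longrightarrow> 0 \<le> q i z"
    and q_sum: "\<And>i. i < n \<Longrightarrow> (\<Sum>z\<in>A. q i z) = 1"
  shows "(\<Sum>x\<in>L. w x * (\<Sum>i<n. q i (x ! i))) \<le> B + (real n - 1) * (\<Sum>x\<in>L. w x)"
proof -
  have letter: "x ! i \<in> A" if "x \<in> L" "i < n" for x i
    using that by (auto simp: L_def)
  have q01: "q i (x ! i) \<in> {0..1}" if "x \<in> L" "i < n" for x i
  proof -
    have "q i (x ! i) \<le> (\<Sum>z\<in>A. q i z)"
      using letter[OF that] q_nonneg[OF that(2)] \<open>finite A\<close> by (intro member_le_sum) auto
    then show ?thesis
      using q_nonneg[OF that(2) letter[OF that]] q_sum[OF that(2)] by simp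
  qed
  have "(\<Sum>x\<in>L. w x * (\<Sum>i<n. q i (x ! i)))
      \<le> (\<Sum>x\<in>L. w x * (real n - 1 + (\<Prod>i<n. q i (x ! i))))"
    by (intro sum_mono mult_left_mono sum_positions_le_prod q01 w_nonneg)
  also have "\<dots> = (real n - 1) * (\<Sum>x\<in>L. w x) + (\<Sum>x\<in>L. w x * (\<Prod>i<n. q i (x ! i)))"
    by (simp add: sum_distrib_left sum.distrib[symmetric] algebra_simps)
  also have "(\<Sum>x\<in>L. w x * (\<Prod>i<n. q i (x ! i))) \<le> (\<Sum>x\<in>L. B * (\<Prod>i<n. q i (x ! i)))"
    using q01 by (intro sum_mono mult_right_mono w_le prod_nonneg) auto
  also have "\<dots> = B"
    by (simp add: L_def sum_distrib_left[symmetric] sum_lists_length_prod q_sum)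
  finally show ?thesis by simp
qed

lemma sum_rac_prob_correct_eq:
  "(\<Sum>x\<in>X. \<Sum>y\<in>{1..n}. rac_prob M pe pd (x ! (y - 1)) x y)
    = (\<Sum>m\<in>M. \<Sum>x\<in>X. pe x m * (\<Sum>i<n. pd (Suc i) m (x ! i)))"
proof -
  have "(\<Sum>y\<in>{1..n}. rac_prob M pe pd (x ! (y - 1)) x y)
      = (\<Sum>m\<in>M. pe x m * (\<Sum>i<n. pd (Suc i) m (x ! i)))" for x
    by (simp add: sum.atLeast1_atMost_eq rac_prob_def sum_distrib_left sum.swap[of _ M])
  then show ?thesis
    by (simp add: sum.swap[of _ X])
qed

lemma rac_strings_eq_lists: "rac_strings n d = {xs. set xs \<subseteq> {1..d} \<and> length xs = n}"
  by (auto simp: rac_strings_def)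

theorem theorem1:
  fixes n d :: nat and M :: "'m set"
    and pe :: "nat list \<Rightarrow> 'm \<Rightarrow> real" and pd :: "nat \<Rightarrow> 'm \<Rightarrow> nat \<Rightarrow> real"
  assumes "n \<ge> 1" and "d \<ge> 2"
    and "classical_protocol n d M pe pd"
  shows "real n * success_C n d M pe pd + 1 - real n \<le> distinguishability_C n d M pe"
proof -
  let ?R = "rac_strings n d"
  let ?Q = "\<lambda>m. Max ((\<lambda>x. pe x m) ` ?R)"
  let ?correct = "\<lambda>m x. \<Sum>i<n. pd (Suc i) m (x ! i)"
  have cardR: "card ?R = d ^ n"
    by (simp add: rac_strings_eq_lists card_lists_length_eq)
  have "(\<Sum>x\<in>?R. pe x m * ?correct m x) \<le> ?Q m + (real n - 1) * (\<Sum>x\<in>?R. pe x m)"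
    if "m \<in> M" for m
    using assms(3) that unfolding rac_strings_eq_lists
    by (intro sum_weighted_correct_positions_le Max_ge finite_imageI finite_lists_length_eq)
      (auto simp: classical_protocol_def rac_strings_eq_lists)
  then have "(\<Sum>m\<in>M. \<Sum>x\<in>?R. pe x m * ?correct m x)
      \<le> (\<Sum>m\<in>M. ?Q m + (real n - 1) * (\<Sum>x\<in>?R. pe x m))"
    by (rule sum_mono)
  also have "\<dots> = (\<Sum>m\<in>M. ?Q m) + (real n - 1) * (\<Sum>x\<in>?R. \<Sum>m\<in>M. pe x m)"
    by (simp add: sum.distrib sum_distrib_left sum.swap[of _ M])
  also have "(\<Sum>x\<in>?R. \<Sum>m\<in>M. pe x m) = real d ^ n"
    using assms(3) cardR by (simp add: classical_protocol_def)
  finally have "real n * success_C n d M pe pd \<le> distinguishability_C n d M pe + (real n - 1)"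
    using assms(1,2) unfolding success_C_def distinguishability_C_def sum_rac_prob_correct_eq
    by (simp add: field_simps)
  then show ?thesis by simp
qed

end
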